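(* Let $p=p(n)\ge n^{-1/2}$, $G=G_{n,p}$, let $X$ be the number of edges of $G$ that lie in no triangle of $G$, and let $\mu(p)=\mathbb{E}X=\binom n2 p(1-p^2)^{n-2}$. If $\mu(p)\to\infty$ as $n\to\infty$, then $\Pr(X=0)\to 0$. In particular this holds if $p<\sqrt{(3/2-\varepsilon)\log n/n}$ for some fixed constant $\varepsilon>0$.
   Context: $G_{n,p}$ is the binomial random graph on $[n]$, each edge present independently with probability $p$; $\log$ is the natural logarithm. *)

theory Defs
  imports "HOL-Analysis.Analysis" "HOL-Probability.Probability"
begin

text \<open>Potential edges of a graph on vertex set [n] = {1..n}: pairs (i,j) with 1 <= i < j <= n.
  A graph is encoded by its edge indicator on these pairs.\<close>
definition pot_edges :: "nat \<Rightarrow> (nat \<times> nat) set" where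
  "pot_edges n = {(i, j). 1 \<le> i \<and> i < j \<and> j \<le> n}"

definition G_np :: "nat \<Rightarrow> real \<Rightarrow> (nat \<times> nat \<Rightarrow> bool) pmf" where
  "G_np n p = Pi_pmf (pot_edges n) False (\<lambda>_. bernoulli_pmf p)"

definition adj :: "(nat \<times> nat \<Rightarrow> bool) \<Rightarrow> nat \<Rightarrow> nat \<Rightarrow> bool" where
  "adj G u v = (if u < v then G (u, v) else if v < u then G (v, u) else False)"

definition triangle_free_edges :: "nat \<Rightarrow> (nat \<times> nat \<Rightarrow> bool) \<Rightarrow> nat" where
  "triangle_free_edges n G =
     card {e \<in> pot_edges n. G e \<and>
       \<not> (\<exists>k\<in>{1..n}. adj G (fst e) k \<and> adj G (snd e) k)}"

end

theory Submission
  imports Defs "HOL-Real_Asymp.Real_Asymp"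
begin

text \<open>
  Second moment method. Write X as the sum of the indicators Y_e that the edge e = ab is present
  and lies in no triangle. Y_e only involves the pair ab and the pairs {ak, bk}, which are
  disjoint for distinct k, so mu = E X = (n choose 2) p (1 - p^2)^(n-2). In the same way
  E[Y_e Y_f] <= p^2 (1 - p^2)^(2(n-4)) for disjoint edges and E[Y_e Y_f] <= p^2 (1 - 2p^2 + p^3)^(n-3)
  for the O(n^3) pairs sharing a vertex. Chebyshev's inequality then gives, for mu >= 1 and
  p <= 1/10, P(X = 0) <= 1/mu + ((1 - p^2)^(-4) - 1) + 32 sqrt n / n.
  If mu -> \<infinity>, then (1 - p^2)^(n-2) >= 1/n^2 forces p^2 = O(log n / n), so all three terms vanish.
  For the second claim, p^2 < c log n / n with c = 3/2 - \<epsilon> gives (1 - p^2)^n >= n^(-c) / e, and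
  with p >= n^(-1/2) this yields mu >= n^\<epsilon> / (4e) -> \<infinity>.
\<close>

section \<open>Product measures and the second moment method\<close>

lemma nn_integral_Pi_pmf_subset:
  fixes f :: "('a \<Rightarrow> 'b) \<Rightarrow> ennreal"
  assumes "finite I" "A \<subseteq> I" "\<And>g h. (\<forall>x\<in>A. g x = h x) \<Longrightarrow> f g = f h"
  shows "(\<integral>\<^sup>+G. f G \<partial>Pi_pmf A dflt P) = (\<integral>\<^sup>+G. f G \<partial>Pi_pmf I dflt P)"
proof -
  have "(\<integral>\<^sup>+G. f G \<partial>Pi_pmf A dflt P) = (\<integral>\<^sup>+G. f (\<lambda>x. if x \<in> A then G x else dflt) \<partial>Pi_pmf I dflt P)"
    by (subst Pi_pmf_subset[OF assms(1,2)]) simp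
  also have "\<dots> = (\<integral>\<^sup>+G. f G \<partial>Pi_pmf I dflt P)"
    by (intro nn_integral_cong assms(3)) auto
  finally show ?thesis .
qed

lemma nn_integral_Pi_pmf_prod_blocks:
  fixes f :: "'k \<Rightarrow> ('a \<Rightarrow> 'b) \<Rightarrow> ennreal"
  assumes "finite K" "finite I" "\<And>k. k \<in> K \<Longrightarrow> J k \<subseteq> I" "disjoint_family_on J K"
    and "\<And>k g h. k \<in> K \<Longrightarrow> (\<forall>x\<in>J k. g x = h x) \<Longrightarrow> f k g = f k h"
  shows "(\<integral>\<^sup>+G. (\<Prod>k\<in>K. f k G) \<partial>Pi_pmf I dflt P) = (\<Prod>k\<in>K. \<integral>\<^sup>+G. f k G \<partial>Pi_pmf I dflt P)"
  using assms
proof (induction K arbitrary: I rule: finite_induct)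
  case empty
  then show ?case by simp
next
  case (insert k K)
  define A where "A = J k"
  define B where "B = I - A"
  have AI: "A \<subseteq> I" using insert.prems(2) by (auto simp: A_def)
  have fin: "finite A" "finite B" using AI insert.prems(1) finite_subset by (auto simp: B_def)
  have IAB: "I = A \<union> B" "A \<inter> B = {}" using AI by (auto simp: B_def)
  have JB: "J j \<subseteq> B" if "j \<in> K" for j
  proof -
    have "J j \<inter> J k = {}"
      using insert.prems(3) that insert.hyps(2) unfolding disjoint_family_on_def by fastforce
    then show ?thesis using insert.prems(2)[of j] that by (auto simp: B_def A_def)
  qed
  have local_K: "disjoint_family_on J K" using insert.prems(3) by (auto simp: disjoint_family_on_def)
  let ?merge = "\<lambda>(g, h) x. if x \<in> A then g x else h x"
  let ?Q = "pair_pmf (Pi_pmf A dflt P) (Pi_pmf B dflt P)"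
  have "(\<integral>\<^sup>+G. (\<Prod>j\<in>insert k K. f j G) \<partial>Pi_pmf I dflt P)
      = (\<integral>\<^sup>+gh. f k (?merge gh) * (\<Prod>j\<in>K. f j (?merge gh)) \<partial>?Q)"
    using insert.hyps by (subst IAB(1), subst Pi_pmf_union[OF fin IAB(2)]) simp
  also have "\<dots> = (\<integral>\<^sup>+gh. f k (fst gh) * (\<Prod>j\<in>K. f j (snd gh)) \<partial>?Q)"
  proof (intro nn_integral_cong)
    fix gh :: "('a \<Rightarrow> 'b) \<times> ('a \<Rightarrow> 'b)"
    have "f k (?merge gh) = f k (fst gh)"
      by (rule insert.prems(4)) (auto simp: A_def split: prod.split)
    moreover have "f j (?merge gh) = f j (snd gh)" if "j \<in> K" for j
      by (rule insert.prems(4)) (use that JB[OF that] in \<open>auto simp: B_def split: prod.split\<close>)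
    ultimately show "f k (?merge gh) * (\<Prod>j\<in>K. f j (?merge gh)) = f k (fst gh) * (\<Prod>j\<in>K. f j (snd gh))"
      by simp
  qed
  also have "\<dots> = (\<integral>\<^sup>+g. f k g \<partial>Pi_pmf A dflt P) * (\<integral>\<^sup>+h. (\<Prod>j\<in>K. f j h) \<partial>Pi_pmf B dflt P)"
    by (simp add: nn_integral_pair_pmf' nn_integral_cmult nn_integral_multc)
  also have "(\<integral>\<^sup>+h. (\<Prod>j\<in>K. f j h) \<partial>Pi_pmf B dflt P) = (\<Prod>j\<in>K. \<integral>\<^sup>+h. f j h \<partial>Pi_pmf B dflt P)"
    by (rule insert.IH[OF fin(2) JB local_K]) (use insert.prems(4) in auto)
  also have "\<dots> = (\<Prod>j\<in>K. \<integral>\<^sup>+h. f j h \<partial>Pi_pmf I dflt P)"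
  proof (intro prod.cong refl nn_integral_Pi_pmf_subset insert.prems(1))
    fix j and g h :: "'a \<Rightarrow> 'b" assume "j \<in> K" "\<forall>x\<in>B. g x = h x"
    then show "f j g = f j h" using insert.prems(4)[of j g h] JB by auto
  qed (auto simp: B_def)
  also have "(\<integral>\<^sup>+g. f k g \<partial>Pi_pmf A dflt P) = (\<integral>\<^sup>+g. f k g \<partial>Pi_pmf I dflt P)"
    by (intro nn_integral_Pi_pmf_subset insert.prems(1) AI) (use insert.prems(4) A_def in auto)
  finally show ?case using insert.hyps by simp
qed

lemma expectation_of_bool_Pi_pmf_blocks:
  fixes C :: "'k \<Rightarrow> ('a \<Rightarrow> 'b) \<Rightarrow> bool"
  assumes "finite K" "finite I" "\<And>k. k \<in> K \<Longrightarrow> J k \<subseteq> I" "disjoint_family_on J K"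
    and "\<And>k g h. k \<in> K \<Longrightarrow> (\<forall>x\<in>J k. g x = h x) \<Longrightarrow> C k g = C k h"
  shows "measure_pmf.expectation (Pi_pmf I dflt P) (\<lambda>G. of_bool (\<forall>k\<in>K. C k G) :: real)
       = (\<Prod>k\<in>K. measure_pmf.expectation (Pi_pmf I dflt P) (\<lambda>G. of_bool (C k G)))"
proof -
  have of_bool_ennreal: "measure_pmf.expectation M (\<lambda>x. of_bool (Q x) :: real) = enn2real (\<integral>\<^sup>+x. of_bool (Q x) \<partial>M)"
    for M :: "'c pmf" and Q
    by (subst integral_eq_nn_integral) (auto intro!: arg_cong[where f=enn2real] nn_integral_cong)
  have "(\<integral>\<^sup>+G. (\<Prod>k\<in>K. of_bool (C k G) :: ennreal) \<partial>Pi_pmf I dflt P)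
      = (\<Prod>k\<in>K. \<integral>\<^sup>+G. of_bool (C k G) \<partial>Pi_pmf I dflt P)"
  proof (rule nn_integral_Pi_pmf_prod_blocks[OF assms(1-4)])
    fix k and g h :: "'a \<Rightarrow> 'b" assume "k \<in> K" "\<forall>x\<in>J k. g x = h x"
    then have "C k g = C k h" by (rule assms(5))
    then show "(of_bool (C k g) :: ennreal) = of_bool (C k h)" by simp
  qed
  moreover have "(\<Prod>k\<in>K. of_bool (C k G) :: ennreal) = of_bool (\<forall>k\<in>K. C k G)" for G
    using assms(1) by (induction K rule: finite_induct) auto
  moreover have "enn2real (\<Prod>k\<in>K. x k) = (\<Prod>k\<in>K. enn2real (x k))" for x :: "'k \<Rightarrow> ennreal"
    by (induction K rule: infinite_finite_induct) (auto simp: enn2real_mult)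
  ultimately show ?thesis
    by (simp add: of_bool_ennreal)
qed

lemma (in prob_space) prob_eq_0_le_second_moment:
  fixes X :: "'a \<Rightarrow> real"
  assumes [measurable]: "random_variable borel X"
    and square_integrable: "integrable M (\<lambda>x. X x ^ 2)" and mean_pos: "expectation X > 0"
  shows "prob {x\<in>space M. X x = 0} \<le> (expectation (\<lambda>x. X x ^ 2) - (expectation X)\<^sup>2) / (expectation X)\<^sup>2"
proof -
  have "prob {x\<in>space M. X x = 0} \<le> prob {x\<in>space M. \<bar>X x - expectation X\<bar> \<ge> expectation X}"
    by (rule finite_measure_mono) (use mean_pos in auto)
  also have "\<dots> \<le> variance X / (expectation X)\<^sup>2"
    by (rule Chebyshev_inequality[OF assms(1) square_integrable mean_pos])
  also have "variance X = expectation (\<lambda>x. X x ^ 2) - (expectation X)\<^sup>2"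
    by (rule variance_eq[OF square_integrable_imp_integrable[OF assms(1) square_integrable] square_integrable])
  finally show ?thesis .
qed

locale bernoulli_Pi_pmf =
  fixes I :: "'a set" and p :: real
  assumes finite_I: "finite I" and p_nonneg: "0 \<le> p" and p_le_1: "p \<le> 1"
begin

abbreviation "M \<equiv> Pi_pmf I False (\<lambda>_. bernoulli_pmf p)"
abbreviation "E (f :: ('a \<Rightarrow> bool) \<Rightarrow> real) \<equiv> measure_pmf.expectation M f"

lemma integrable_M: "integrable M (f :: _ \<Rightarrow> real)"
proof -
  have "set_pmf M \<subseteq> PiE_dflt I False (\<lambda>_. UNIV)"
    using set_Pi_pmf_subset[OF finite_I, of False "\<lambda>_. bernoulli_pmf p"] by (auto simp: PiE_dflt_def)
  then show ?thesis
    using finite_I by (intro integrable_measure_pmf_finite finite_subset[OF _ finite_PiE_dflt]) auto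
qed

lemma expectation_all_coords:
  assumes "S \<subseteq> I"
  shows "E (\<lambda>G. of_bool (\<forall>s\<in>S. G s)) = p ^ card S"
proof -
  have fin: "finite S" using assms finite_I finite_subset by blast
  have "E (\<lambda>G. of_bool (\<forall>s\<in>S. G s)) = (\<Prod>s\<in>S. E (\<lambda>G. of_bool (G s)))"
    using assms by (intro expectation_of_bool_Pi_pmf_blocks[OF fin finite_I, where J="\<lambda>s. {s}"])
      (auto simp: disjoint_family_on_def)
  also have "\<dots> = (\<Prod>s\<in>S. p)"
  proof (rule prod.cong)
    fix s assume "s \<in> S"
    then have "map_pmf (\<lambda>G. G s) M = bernoulli_pmf p"
      using assms by (simp add: Pi_pmf_component[OF finite_I] subsetD)
    then show "E (\<lambda>G. of_bool (G s)) = p"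
      using integral_map_pmf[of "\<lambda>G. G s" M "of_bool :: bool \<Rightarrow> real"] p_nonneg p_le_1 by simp
  qed simp
  finally show ?thesis by simp
qed

lemma expectation_neither_all:
  assumes "S \<subseteq> I" "T \<subseteq> I"
  shows "E (\<lambda>G. of_bool (\<not> (\<forall>s\<in>S. G s) \<and> \<not> (\<forall>t\<in>T. G t)))
       = 1 - p ^ card S - p ^ card T + p ^ card (S \<union> T)"
proof -
  have "E (\<lambda>G. of_bool (\<not> (\<forall>s\<in>S. G s) \<and> \<not> (\<forall>t\<in>T. G t)))
      = E (\<lambda>G. 1 - of_bool (\<forall>s\<in>S. G s) - of_bool (\<forall>t\<in>T. G t) + of_bool (\<forall>x\<in>S \<union> T. G x))"
    by (intro Bochner_Integration.integral_cong) auto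
  also have "\<dots> = 1 - p ^ card S - p ^ card T + p ^ card (S \<union> T)"
    using assms by (simp add: Bochner_Integration.integral_diff Bochner_Integration.integral_add
        integrable_M expectation_all_coords)
  finally show ?thesis .
qed

end

section \<open>Edges and triangle-free edges\<close>

definition edge :: "nat \<Rightarrow> nat \<Rightarrow> nat \<times> nat" where
  "edge u v = (min u v, max u v)"

lemma edge_eq_iff: "edge u v = edge u' v' \<longleftrightarrow> (u = u' \<and> v = v') \<or> (u = v' \<and> v = u')"
  by (auto simp: edge_def min_def max_def)

lemma edge_commute: "edge u v = edge v u"
  by (simp add: edge_def min.commute max.commute)

lemma edge_in_pot_edges: "u \<in> {1..n} \<Longrightarrow> v \<in> {1..n} \<Longrightarrow> u \<noteq> v \<Longrightarrow> edge u v \<in> pot_edges n"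
  by (auto simp: edge_def pot_edges_def min_def max_def)

lemma edge_of_pot_edge: "e \<in> pot_edges n \<Longrightarrow> e = edge (fst e) (snd e)"
  by (auto simp: pot_edges_def edge_def)

lemma adj_eq_edge: "u \<noteq> v \<Longrightarrow> adj G u v = G (edge u v)"
  by (auto simp: adj_def edge_def min_def max_def)

lemma finite_pot_edges: "finite (pot_edges n)"
  by (rule finite_subset[of _ "{1..n} \<times> {1..n}"]) (auto simp: pot_edges_def)

lemma card_pot_edges: "card (pot_edges n) = n choose 2"
proof (induction n)
  case 0
  have "pot_edges 0 = {}" by (auto simp: pot_edges_def)
  then show ?case by simp
next
  case (Suc n)
  have "pot_edges (Suc n) = pot_edges n \<union> (\<lambda>i. (i, Suc n)) ` {1..n}"
    by (auto simp: pot_edges_def)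
  then have "card (pot_edges (Suc n)) = card (pot_edges n) + card ((\<lambda>i. (i, Suc n)) ` {1..n})"
    by (simp only:) (intro card_Un_disjoint finite_pot_edges; auto simp: pot_edges_def)
  also have "card ((\<lambda>i. (i, Suc n)) ` {1..n}) = n"
    by (subst card_image) (auto simp: inj_on_def)
  finally show ?case using Suc by (simp add: numeral_2_eq_2)
qed

definition edge_star :: "nat set \<Rightarrow> nat \<Rightarrow> (nat \<times> nat) set" where
  "edge_star V k = (\<lambda>x. edge x k) ` V"

lemma card_edge_star: "k \<notin> V \<Longrightarrow> card (edge_star V k) = card V"
  unfolding edge_star_def by (rule card_image) (auto simp: inj_on_def edge_eq_iff)

lemma edge_star_subset_pot_edges:
  "V \<subseteq> {1..n} \<Longrightarrow> k \<in> {1..n} \<Longrightarrow> k \<notin> V \<Longrightarrow> edge_star V k \<subseteq> pot_edges n"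
  unfolding edge_star_def by (blast intro: edge_in_pot_edges)

lemma edge_star_disjoint:
  "k \<notin> V \<Longrightarrow> l \<notin> V \<Longrightarrow> k \<noteq> l \<Longrightarrow> edge_star V k \<inter> edge_star V l = {}"
  by (auto simp: edge_star_def edge_eq_iff)

lemma edge_notin_edge_star: "x \<in> V \<Longrightarrow> y \<in> V \<Longrightarrow> k \<notin> V \<Longrightarrow> edge x y \<notin> edge_star V k"
  by (auto simp: edge_star_def edge_eq_iff)

definition triangle_free_edge :: "nat \<Rightarrow> (nat \<times> nat \<Rightarrow> bool) \<Rightarrow> nat \<Rightarrow> nat \<Rightarrow> bool" where
  "triangle_free_edge n G a b \<longleftrightarrow> G (edge a b) \<and> \<not> (\<exists>k\<in>{1..n}. adj G a k \<and> adj G b k)"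

lemma triangle_free_edge_cong:
  "edge a b = edge a' b' \<Longrightarrow> triangle_free_edge n G a b = triangle_free_edge n G a' b'"
  by (auto simp: edge_eq_iff triangle_free_edge_def edge_commute)

lemma triangle_free_edge_iff:
  assumes "a \<noteq> b"
  shows "triangle_free_edge n G a b \<longleftrightarrow>
    G (edge a b) \<and> (\<forall>k\<in>{1..n} - {a, b}. \<not> (\<forall>e\<in>edge_star {a, b} k. G e))"
proof -
  have irrefl: "\<not> adj G u u" for u
    by (simp add: adj_def)
  have "adj G a k \<and> adj G b k \<longleftrightarrow> k \<notin> {a, b} \<and> G (edge a k) \<and> G (edge b k)" for k
    by (cases "k = a \<or> k = b") (auto simp: adj_eq_edge irrefl)
  then show ?thesis by (auto simp: triangle_free_edge_def edge_star_def)
qed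

lemma real_triangle_free_edges:
  "real (triangle_free_edges n G) = (\<Sum>e\<in>pot_edges n. of_bool (triangle_free_edge n G (fst e) (snd e)))"
proof -
  have "{e \<in> pot_edges n. G e \<and> \<not> (\<exists>k\<in>{1..n}. adj G (fst e) k \<and> adj G (snd e) k)}
      = pot_edges n \<inter> {e. triangle_free_edge n G (fst e) (snd e)}"
    using edge_of_pot_edge by (auto simp: triangle_free_edge_def)
  then show ?thesis
    by (simp add: triangle_free_edges_def finite_pot_edges)
qed

definition share_vertex :: "nat \<times> nat \<Rightarrow> nat \<times> nat \<Rightarrow> bool" where
  "share_vertex e f \<longleftrightarrow> e \<noteq> f \<and> (fst e = fst f \<or> fst e = snd f \<or> snd e = fst f \<or> snd e = snd f)"

lemma card_share_vertex_le: "card {f \<in> pot_edges n. share_vertex e f} \<le> 4 * n"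
proof -
  obtain a b where e: "e = (a, b)" by fastforce
  have "{f \<in> pot_edges n. share_vertex e f} \<subseteq> ({a, b} \<times> {1..n}) \<union> ({1..n} \<times> {a, b})"
    by (auto simp: share_vertex_def pot_edges_def e)
  then have "card {f \<in> pot_edges n. share_vertex e f} \<le> card (({a, b} \<times> {1..n}) \<union> ({1..n} \<times> {a, b}))"
    by (intro card_mono) auto
  also have "\<dots> \<le> card ({a, b} \<times> {1..n}) + card ({1..n} \<times> {a, b})"
    by (rule card_Un_le)
  also have "\<dots> \<le> 2 * n + n * 2"
    by (intro add_mono) (auto simp: card_cartesian_product card_insert_le_m1)
  finally show ?thesis by simp
qed

lemma share_vertex_relabel:
  assumes "(a, b) \<in> pot_edges n" "(c, d) \<in> pot_edges n" "share_vertex (a, b) (c, d)"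
  obtains v u w where "v \<in> {1..n}" "u \<in> {1..n}" "w \<in> {1..n}" "v \<noteq> u" "v \<noteq> w" "u \<noteq> w"
    "edge a b = edge v u" "edge c d = edge v w"
proof -
  consider "a = c" | "a = d" | "b = c" | "b = d"
    using assms(3) by (auto simp: share_vertex_def)
  then show ?thesis
  proof cases
    case 1
    then show ?thesis by (intro that[of a b d]) (use assms in \<open>auto simp: pot_edges_def share_vertex_def\<close>)
  next
    case 2
    then show ?thesis by (intro that[of a b c]) (use assms in \<open>auto simp: pot_edges_def edge_commute\<close>)
  next
    case 3
    then show ?thesis by (intro that[of b a d]) (use assms in \<open>auto simp: pot_edges_def edge_commute\<close>)
  next
    case 4
    then show ?thesis by (intro that[of b a c]) (use assms in \<open>auto simp: pot_edges_def share_vertex_def edge_commute\<close>)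
  qed
qed

section \<open>Elementary estimates\<close>

lemma real_choose_two: "2 * real (n choose 2) = real n * (real n - 1)"
  by (induction n) (auto simp: numeral_2_eq_2 algebra_simps)

lemma real_choose_two_le: "real (n choose 2) \<le> (real n)\<^sup>2"
  using real_choose_two[of n] by (simp add: power2_eq_square algebra_simps)

lemma real_choose_two_ge:
  assumes "n \<ge> 4"
  shows "(real n)\<^sup>2 / 4 \<le> real (n choose 2)"
proof -
  have "2 * real n \<le> real n * real n"
    using assms by (intro mult_right_mono) auto
  then show ?thesis
    using real_choose_two[of n] by (simp add: power2_eq_square algebra_simps)
qed

lemma square_le_of_le_tenth: "0 \<le> (p :: real) \<Longrightarrow> p \<le> 1/10 \<Longrightarrow> p\<^sup>2 \<le> 1/100"
  using mult_mono[of p "1/10" p "1/10"] by (simp add: power2_eq_square)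

lemma half_le_square_one_minus_square:
  "0 \<le> (p :: real) \<Longrightarrow> p \<le> 1/10 \<Longrightarrow> 1/2 \<le> (1 - p\<^sup>2)\<^sup>2"
proof -
  assume "0 \<le> p" "p \<le> 1/10"
  then have "(99/100)\<^sup>2 \<le> (1 - p\<^sup>2)\<^sup>2"
    using square_le_of_le_tenth by (intro power_mono) auto
  then show ?thesis by (simp add: power2_eq_square)
qed

lemma cherry_factor_nonneg: "0 \<le> (p :: real) \<Longrightarrow> p \<le> 1 \<Longrightarrow> 0 \<le> 1 - 2 * p\<^sup>2 + p ^ 3"
proof -
  assume "0 \<le> p" "p \<le> 1"
  moreover have "1 - 2 * p\<^sup>2 + p ^ 3 = (1 - p) * (1 + p * (1 - p))"
    by (simp add: algebra_simps power2_eq_square power3_eq_cube)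
  ultimately show ?thesis by simp
qed

text \<open>Pairs of edges sharing a vertex are negligible: their factor 1 - 2p^2 + p^3 exceeds the factor
  (1 - p^2)^2 of two disjoint edges only by 1 + 2p^3, and (1 + 2p^3)^4 <= 1/(1 - p^2).\<close>

lemma cherry_factor_le:
  fixes p :: real
  assumes "0 \<le> p" "p \<le> 1/10"
  shows "1 - 2 * p\<^sup>2 + p ^ 3 \<le> (1 - p\<^sup>2)\<^sup>2 * (1 + 2 * p ^ 3)"
proof -
  have "(1 - p\<^sup>2)\<^sup>2 * (1 + 2 * p ^ 3) - (1 - 2 * p\<^sup>2 + p ^ 3) = p ^ 3 * (2 * (1 - p\<^sup>2)\<^sup>2 - 1) + p ^ 4"
    by (simp add: algebra_simps power2_eq_square power3_eq_cube power4_eq_xxxx)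
  also have "\<dots> \<ge> 0"
    using half_le_square_one_minus_square[OF assms] assms by (intro add_nonneg_nonneg mult_nonneg_nonneg) auto
  finally show ?thesis by simp
qed

lemma cherry_excess_pow4_le:
  fixes p :: real
  assumes "0 \<le> p" "p \<le> 1/10"
  shows "(1 + 2 * p ^ 3) ^ 4 * (1 - p\<^sup>2) \<le> 1"
proof -
  define y where "y = 2 * p ^ 3"
  have p3: "p ^ 3 \<le> p\<^sup>2 / 10"
    using assms mult_right_mono[of p "1/10" "p\<^sup>2"] by (simp add: power3_eq_cube power2_eq_square)
  have y: "0 \<le> y" "y \<le> 1/100"
    using assms p3 square_le_of_le_tenth[OF assms] by (auto simp: y_def)
  have "y ^ Suc k \<le> y / 100" if "k \<ge> 1" for k
  proof -
    have "y ^ k \<le> 1/100" using power_decreasing[of 1 k y] y that by auto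
    then show ?thesis using y(1) mult_left_mono[of "y ^ k" "1/100" y] by simp
  qed
  from this[of 1] this[of 2] this[of 3] have "(1 + y) ^ 4 \<le> 1 + 5 * y"
    using y by (simp add: algebra_simps power2_eq_square power3_eq_cube power4_eq_xxxx)
  then have "(1 + y) ^ 4 * (1 - p\<^sup>2) \<le> (1 + 5 * y) * (1 - p\<^sup>2)"
    using square_le_of_le_tenth[OF assms] by (intro mult_right_mono) auto
  also have "\<dots> = 1 - p\<^sup>2 + 10 * p ^ 3 - 10 * p ^ 3 * p\<^sup>2"
    by (simp add: y_def algebra_simps)
  also have "\<dots> \<le> 1"
  proof -
    have "0 \<le> p ^ 3 * p\<^sup>2" using assms by simp
    then show ?thesis using p3 by linarith
  qed
  finally show ?thesis by (simp add: y_def)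
qed

lemma cherry_excess_pow_le_sqrt:
  fixes p :: real
  assumes "n \<ge> 4" "0 \<le> p" "p \<le> 1/10" and mu: "1 \<le> real (n choose 2) * p * (1 - p\<^sup>2) ^ (n - 2)"
  shows "(1 + 2 * p ^ 3) ^ (n - 3) \<le> sqrt (real n)"
proof -
  define t where "t = 1 - p\<^sup>2"
  have t: "0 < t" "t \<le> 1"
    using square_le_of_le_tenth[OF assms(2,3)] by (auto simp: t_def)
  have "(((1 + 2 * p ^ 3) ^ (n - 3))\<^sup>2)\<^sup>2 = ((1 + 2 * p ^ 3) ^ 4) ^ (n - 3)"
    by (simp flip: power_mult)
  also have "\<dots> \<le> (1 / t) ^ (n - 3)"
    using cherry_excess_pow4_le[OF assms(2,3)] t by (intro power_mono) (auto simp: t_def field_simps)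
  also have "\<dots> \<le> (1 / t) ^ (n - 2)"
    using t assms(1) by (intro power_increasing) auto
  also have "\<dots> \<le> real (n choose 2) * p"
    using mu t by (simp add: t_def field_simps)
  also have "\<dots> \<le> real (n choose 2)"
    using assms(2,3) by (intro mult_right_le_one_le) auto
  also have "\<dots> \<le> (real n)\<^sup>2"
    by (rule real_choose_two_le)
  finally have "((1 + 2 * p ^ 3) ^ (n - 3))\<^sup>2 \<le> real n"
    by (rule power2_le_imp_le) simp
  then show ?thesis by (rule real_le_rsqrt)
qed

lemma disjoint_pairs_ratio:
  fixes N p t :: real
  assumes "n \<ge> 4" "N \<noteq> 0" "p \<noteq> 0" "t \<noteq> 0"
  shows "N\<^sup>2 * (p\<^sup>2 * t ^ (2 * (n - 4))) / (N * p * t ^ (n - 2))\<^sup>2 = 1 / t ^ 4"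
proof -
  have "(N * p * t ^ (n - 2))\<^sup>2 = N\<^sup>2 * (p\<^sup>2 * t ^ (2 * (n - 4))) * t ^ 4"
  proof -
    have "(n - 2) * 2 = 2 * (n - 4) + 4" using assms(1) by simp
    then have "(t ^ (n - 2))\<^sup>2 = t ^ (2 * (n - 4)) * t ^ 4"
      by (simp only: power_mult[symmetric] power_add)
    then show ?thesis by (simp add: power_mult_distrib)
  qed
  then show ?thesis using assms by (simp add: field_simps)
qed

lemma shared_pairs_ratio_le:
  fixes n :: nat and p :: real
  defines "N \<equiv> real (n choose 2)" and "\<mu> \<equiv> real (n choose 2) * p * (1 - p\<^sup>2) ^ (n - 2)"
  assumes n: "n \<ge> 4" and p: "0 \<le> p" "p \<le> 1/10" and mu: "1 \<le> \<mu>"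
  shows "4 * real n * N * (p\<^sup>2 * (1 - 2 * p\<^sup>2 + p ^ 3) ^ (n - 3)) / \<mu>\<^sup>2 \<le> 32 * sqrt (real n) / real n"
proof -
  define t where "t = 1 - p\<^sup>2"
  define y where "y = (1 + 2 * p ^ 3) ^ (n - 3)"
  have t: "0 < t" "1/2 \<le> t\<^sup>2"
    using square_le_of_le_tenth[OF p] half_le_square_one_minus_square[OF p] by (auto simp: t_def)
  have N: "(real n)\<^sup>2 / 4 \<le> N" "0 < N"
    using real_choose_two_ge[OF n] n by (auto simp: N_def intro: less_le_trans[of 0 "(real n)\<^sup>2 / 4"])
  have "0 < p" using mu p by (cases "p = 0") (auto simp: \<mu>_def)
  have "0 \<le> 1 - 2 * p\<^sup>2 + p ^ 3"
    using p by (intro cherry_factor_nonneg) auto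
  then have "(1 - 2 * p\<^sup>2 + p ^ 3) ^ (n - 3) \<le> (t\<^sup>2 * (1 + 2 * p ^ 3)) ^ (n - 3)"
    using cherry_factor_le[OF p] by (intro power_mono) (auto simp: t_def)
  also have "\<dots> = t ^ (2 * (n - 3)) * y"
    by (simp add: y_def power_mult_distrib power_mult)
  finally have cherry: "(1 - 2 * p\<^sup>2 + p ^ 3) ^ (n - 3) \<le> t ^ (2 * (n - 3)) * y" .
  have mu_sq: "\<mu>\<^sup>2 = N\<^sup>2 * p\<^sup>2 * t ^ (2 * (n - 3)) * t\<^sup>2"
  proof -
    have "(n - 2) * 2 = 2 * (n - 3) + 2" using n by simp
    then have "(t ^ (n - 2))\<^sup>2 = t ^ (2 * (n - 3)) * t\<^sup>2"
      by (simp only: power_mult[symmetric] power_add)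
    then show ?thesis by (simp add: \<mu>_def N_def t_def power_mult_distrib)
  qed
  have "4 * real n * N * (p\<^sup>2 * (1 - 2 * p\<^sup>2 + p ^ 3) ^ (n - 3)) / \<mu>\<^sup>2
      \<le> 4 * real n * N * (p\<^sup>2 * (t ^ (2 * (n - 3)) * y)) / \<mu>\<^sup>2"
    using cherry N by (intro divide_right_mono mult_left_mono) auto
  also have "\<dots> = 4 * real n * y / (N * t\<^sup>2)"
    unfolding mu_sq using N t \<open>0 < p\<close> by (simp add: field_simps power2_eq_square)
  also have "\<dots> \<le> 4 * real n * sqrt (real n) / ((real n)\<^sup>2 / 4 * (1/2))"
    using cherry_excess_pow_le_sqrt[OF n p mu[unfolded \<mu>_def]] N t n
    by (intro frac_le mult_left_mono mult_mono) (auto simp: y_def)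
  also have "\<dots> = 32 * sqrt (real n) / real n"
    using n by (simp add: field_simps power2_eq_square)
  finally show ?thesis .
qed

lemma square_le_of_mean_ge_1:
  fixes p :: real
  assumes n: "n \<ge> 4" and p: "0 \<le> p" "p \<le> 1"
    and mu: "1 \<le> real (n choose 2) * p * (1 - p\<^sup>2) ^ (n - 2)"
  shows "p\<^sup>2 \<le> 2 * ln (real n) / (real n - 2)"
proof -
  define x where "x = p\<^sup>2"
  have x: "0 \<le> x" "x \<le> 1" using p by (auto simp: x_def power_le_one)
  have "(1 - x) ^ (n - 2) \<le> exp (- x) ^ (n - 2)"
    using x exp_ge_add_one_self[of "-x"] by (intro power_mono) auto
  also have "\<dots> = exp (- (real (n - 2) * x))"
    by (simp flip: exp_of_nat_mult)
  finally have power_bound: "(1 - x) ^ (n - 2) \<le> exp (- (real (n - 2) * x))" .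
  have "1 \<le> real (n choose 2) * p * (1 - x) ^ (n - 2)"
    using mu by (simp add: x_def)
  also have "\<dots> \<le> (real n)\<^sup>2 * 1 * exp (- (real (n - 2) * x))"
    using real_choose_two_le[of n] p x power_bound by (intro mult_mono) auto
  finally have "1 \<le> (real n)\<^sup>2 * exp (- (real (n - 2) * x))"
    by simp
  then have "0 \<le> ln ((real n)\<^sup>2 * exp (- (real (n - 2) * x)))"
    by simp
  also have "\<dots> = 2 * ln (real n) - real (n - 2) * x"
    using n by (simp add: ln_mult ln_realpow)
  finally show ?thesis
    using n by (simp add: x_def of_nat_diff field_simps)
qed

lemma mean_lower_bound:
  fixes p c :: real
  assumes n: "n \<ge> 4" and p: "1 / sqrt (real n) \<le> p" "p < sqrt (c * ln (real n) / real n)"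
    and c: "c > 0" and small: "c * ln (real n) / real n \<le> 1/2" "2 * c\<^sup>2 * (ln (real n))\<^sup>2 / real n \<le> 1"
  shows "exp ((3/2 - c) * ln (real n) - 1) / 4 \<le> real (n choose 2) * p * (1 - p\<^sup>2) ^ (n - 2)"
proof -
  define x where "x = p\<^sup>2"
  define L where "L = ln (real n)"
  have npos: "real n > 0" and L: "L \<ge> 0" using n by (auto simp: L_def)
  have x0: "0 \<le> x" by (simp add: x_def)
  have p0: "0 \<le> p" using order_trans[OF _ p(1)] by simp
  have "x \<le> c * L / real n"
  proof -
    have "p\<^sup>2 \<le> (sqrt (c * L / real n))\<^sup>2"
      using p p0 by (intro power_mono) (auto simp: L_def)
    then show ?thesis using c L npos by (simp add: x_def)
  qed
  then have x_half: "x \<le> 1/2" and nx: "real n * x \<le> c * L"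
    using small(1) npos unfolding L_def by (linarith, simp add: field_simps)
  have "real n * (2 * x\<^sup>2) \<le> real n * (2 * (c * L / real n)\<^sup>2)"
    using \<open>x \<le> c * L / real n\<close> x0 npos by (intro mult_left_mono power_mono) auto
  also have "\<dots> \<le> 1"
    using small(2) npos by (simp add: L_def power2_eq_square field_simps)
  finally have nx2: "real n * (2 * x\<^sup>2) \<le> 1" .
  \<comment> \<open>ln (1 - x) >= -x - 2x^2 turns (1 - x)^n into exp (-cL - 1)\<close>
  have "- c * L - 1 \<le> real n * ln (1 - x)"
    using mult_left_mono[OF ln_one_minus_pos_lower_bound[OF x0 x_half], of "real n"] npos nx nx2
    by (simp add: algebra_simps)
  then have "exp (- c * L - 1) \<le> exp (real n * ln (1 - x))"
    by simp
  also have "\<dots> = (1 - x) ^ n"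
    using x_half by (simp add: exp_of_nat_mult)
  also have "\<dots> \<le> (1 - x) ^ (n - 2)"
    using x0 x_half by (intro power_decreasing) auto
  finally have power_bound: "exp (- c * L - 1) \<le> (1 - x) ^ (n - 2)" .
  have "exp ((3/2 - c) * L - 1) / 4 = ((real n)\<^sup>2 / 4) * (1 / sqrt (real n)) * exp (- c * L - 1)"
  proof -
    have "(real n)\<^sup>2 = exp (2 * L)" "1 / sqrt (real n) = exp (- L / 2)"
      using npos by (simp_all add: L_def exp_of_nat_mult[of 2, simplified] exp_minus ln_sqrt[symmetric]
          inverse_eq_divide)
    then show ?thesis by (simp add: algebra_simps flip: exp_add)
  qed
  also have "\<dots> \<le> real (n choose 2) * p * (1 - x) ^ (n - 2)"
    using real_choose_two_ge[OF n] p(1) p0 power_bound by (intro mult_mono) auto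
  finally show ?thesis by (simp add: x_def L_def)
qed

section \<open>Moments of the number of triangle-free edges\<close>

locale gnp_graph =
  fixes n :: nat and p :: real
  assumes p_prob: "0 \<le> p" "p \<le> 1"
begin

sublocale bernoulli_Pi_pmf "pot_edges n" p
  by unfold_locales (auto simp: finite_pot_edges p_prob)

lemma expectation_edges_without_paths:
  fixes F :: "(nat \<times> nat) set" and S T :: "nat \<Rightarrow> (nat \<times> nat) set"
  assumes "finite R" "F \<subseteq> pot_edges n" "\<And>k. k \<in> R \<Longrightarrow> S k \<union> T k \<subseteq> pot_edges n"
    and "\<And>k. k \<in> R \<Longrightarrow> F \<inter> (S k \<union> T k) = {}"
    and "\<And>k l. k \<in> R \<Longrightarrow> l \<in> R \<Longrightarrow> k \<noteq> l \<Longrightarrow> (S k \<union> T k) \<inter> (S l \<union> T l) = {}"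
  shows "E (\<lambda>G. of_bool ((\<forall>e\<in>F. G e) \<and> (\<forall>k\<in>R. \<not> (\<forall>e\<in>S k. G e) \<and> \<not> (\<forall>e\<in>T k. G e))))
       = p ^ card F * (\<Prod>k\<in>R. 1 - p ^ card (S k) - p ^ card (T k) + p ^ card (S k \<union> T k))"
proof -
  \<comment> \<open>independent blocks: \<open>F\<close>, indexed by \<open>None\<close>, and \<open>S k \<union> T k\<close>, indexed by \<open>Some k\<close>\<close>
  define J where "J i = (case i of None \<Rightarrow> F | Some k \<Rightarrow> S k \<union> T k)" for i
  define C where "C i G = (case i of None \<Rightarrow> \<forall>e\<in>F. G e
    | Some k \<Rightarrow> \<not> (\<forall>e\<in>S k. G e) \<and> \<not> (\<forall>e\<in>T k. G e))" for i and G :: "nat \<times> nat \<Rightarrow> bool"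
  have "E (\<lambda>G. of_bool ((\<forall>e\<in>F. G e) \<and> (\<forall>k\<in>R. \<not> (\<forall>e\<in>S k. G e) \<and> \<not> (\<forall>e\<in>T k. G e))))
      = E (\<lambda>G. of_bool (\<forall>i\<in>insert None (Some ` R). C i G))"
    by (simp add: C_def)
  also have "\<dots> = (\<Prod>i\<in>insert None (Some ` R). E (\<lambda>G. of_bool (C i G)))"
  proof (rule expectation_of_bool_Pi_pmf_blocks[where J = J])
    show "disjoint_family_on J (insert None (Some ` R))"
      using assms(4,5) by (auto simp: disjoint_family_on_def J_def split: option.split)
    show "C i g = C i h" if "i \<in> insert None (Some ` R)" "\<forall>x\<in>J i. g x = h x"
      for i and g h :: "nat \<times> nat \<Rightarrow> bool"
      using that by (auto simp: C_def J_def split: option.split)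
    show "J i \<subseteq> pot_edges n" if "i \<in> insert None (Some ` R)" for i
      using that assms(2) by (auto simp: J_def dest!: assms(3))
  qed (use assms(1) finite_pot_edges in auto)
  also have "\<dots> = E (\<lambda>G. of_bool (C None G)) * (\<Prod>k\<in>R. E (\<lambda>G. of_bool (C (Some k) G)))"
    using assms(1) by (simp add: prod.reindex)
  also have "E (\<lambda>G. of_bool (C None G)) = p ^ card F"
    using assms(2) by (simp add: C_def expectation_all_coords)
  also have "E (\<lambda>G. of_bool (C (Some k) G)) = 1 - p ^ card (S k) - p ^ card (T k) + p ^ card (S k \<union> T k)"
    if "k \<in> R" for k
    unfolding C_def option.case using that assms(3) by (intro expectation_neither_all) auto
  then have "(\<Prod>k\<in>R. E (\<lambda>G. of_bool (C (Some k) G)))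
      = (\<Prod>k\<in>R. 1 - p ^ card (S k) - p ^ card (T k) + p ^ card (S k \<union> T k))"
    by (rule prod.cong[OF refl])
  finally show ?thesis .
qed

lemma expectation_triangle_free_edge:
  assumes "a \<in> {1..n}" "b \<in> {1..n}" "a \<noteq> b"
  shows "E (\<lambda>G. of_bool (triangle_free_edge n G a b)) = p * (1 - p\<^sup>2) ^ (n - 2)"
proof -
  define R where "R = {1..n} - {a, b}"
  have card_R: "card R = n - 2"
    using assms by (simp add: R_def card_Diff_subset)
  have R: "k \<in> {1..n}" "k \<notin> {a, b}" if "k \<in> R" for k
    using that by (auto simp: R_def)
  let ?P = "edge_star {a, b}"
  have "E (\<lambda>G. of_bool (triangle_free_edge n G a b))
      = E (\<lambda>G. of_bool ((\<forall>e\<in>{edge a b}. G e) \<and> (\<forall>k\<in>R. \<not> (\<forall>e\<in>?P k. G e) \<and> \<not> (\<forall>e\<in>?P k. G e))))"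
    using assms by (simp add: triangle_free_edge_iff R_def)
  also have "\<dots> = p ^ card {edge a b} * (\<Prod>k\<in>R. 1 - p ^ card (?P k) - p ^ card (?P k) + p ^ card (?P k \<union> ?P k))"
  proof (rule expectation_edges_without_paths)
    show "finite R"
      by (simp add: R_def)
    show "{edge a b} \<subseteq> pot_edges n"
      using assms by (simp add: edge_in_pot_edges)
    show "?P k \<union> ?P k \<subseteq> pot_edges n" if "k \<in> R" for k
      using R[OF that] assms by (simp add: edge_star_subset_pot_edges)
    show "{edge a b} \<inter> (?P k \<union> ?P k) = {}" if "k \<in> R" for k
      using R[OF that] by (simp add: edge_notin_edge_star)
    show "(?P k \<union> ?P k) \<inter> (?P l \<union> ?P l) = {}" if "k \<in> R" "l \<in> R" "k \<noteq> l" for k l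
      using R that by (simp add: edge_star_disjoint)
  qed
  also have "\<dots> = p * (\<Prod>k\<in>R. 1 - p\<^sup>2)"
  proof -
    have "card (?P k) = 2" if "k \<in> R" for k
      using R[OF that] assms by (simp add: card_edge_star)
    then show ?thesis by simp
  qed
  also have "\<dots> = p * (1 - p\<^sup>2) ^ (n - 2)"
    using card_R by simp
  finally show ?thesis .
qed

lemma expectation_disjoint_triangle_free_edges_le:
  assumes "a \<in> {1..n}" "b \<in> {1..n}" "c \<in> {1..n}" "d \<in> {1..n}"
    and "a \<noteq> b" "a \<noteq> c" "a \<noteq> d" "b \<noteq> c" "b \<noteq> d" "c \<noteq> d"
  shows "E (\<lambda>G. of_bool (triangle_free_edge n G a b \<and> triangle_free_edge n G c d))
       \<le> p\<^sup>2 * (1 - p\<^sup>2) ^ (2 * (n - 4))"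
proof -
  define R where "R = {1..n} - {a, b, c, d}"
  have card_R: "card R = n - 4"
    using assms by (simp add: R_def card_Diff_subset)
  have R: "k \<in> {1..n}" "k \<notin> {a, b, c, d}" if "k \<in> R" for k
    using that by (auto simp: R_def)
  let ?S = "edge_star {a, b}" and ?T = "edge_star {c, d}"
  have star: "?S k \<union> ?T k = edge_star {a, b, c, d} k" for k
    by (auto simp: edge_star_def)
  have event: "(\<forall>e\<in>{edge a b, edge c d}. G e) \<and> (\<forall>k\<in>R. \<not> (\<forall>e\<in>?S k. G e) \<and> \<not> (\<forall>e\<in>?T k. G e))"
    if "triangle_free_edge n G a b \<and> triangle_free_edge n G c d" for G
  proof -
    have "G (edge a b)" "\<forall>k\<in>{1..n} - {a, b}. \<not> (\<forall>e\<in>?S k. G e)"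
      using that assms(5) by (simp_all add: triangle_free_edge_iff)
    moreover have "G (edge c d)" "\<forall>k\<in>{1..n} - {c, d}. \<not> (\<forall>e\<in>?T k. G e)"
      using that assms(10) by (simp_all add: triangle_free_edge_iff)
    ultimately show ?thesis
      unfolding R_def by blast
  qed
  have "E (\<lambda>G. of_bool (triangle_free_edge n G a b \<and> triangle_free_edge n G c d))
      \<le> E (\<lambda>G. of_bool ((\<forall>e\<in>{edge a b, edge c d}. G e) \<and> (\<forall>k\<in>R. \<not> (\<forall>e\<in>?S k. G e) \<and> \<not> (\<forall>e\<in>?T k. G e))))"
    using event by (intro integral_mono integrable_M) auto
  also have "\<dots> = p ^ card {edge a b, edge c d} * (\<Prod>k\<in>R. 1 - p ^ card (?S k) - p ^ card (?T k) + p ^ card (?S k \<union> ?T k))"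
  proof (rule expectation_edges_without_paths)
    show "finite R"
      by (simp add: R_def)
    show "{edge a b, edge c d} \<subseteq> pot_edges n"
      using assms by (simp add: edge_in_pot_edges)
    show "?S k \<union> ?T k \<subseteq> pot_edges n" if "k \<in> R" for k
      unfolding star using R[OF that] assms by (simp add: edge_star_subset_pot_edges)
    show "{edge a b, edge c d} \<inter> (?S k \<union> ?T k) = {}" if "k \<in> R" for k
      unfolding star using R[OF that] by (simp add: edge_notin_edge_star)
    show "(?S k \<union> ?T k) \<inter> (?S l \<union> ?T l) = {}" if "k \<in> R" "l \<in> R" "k \<noteq> l" for k l
      unfolding star using R that by (simp add: edge_star_disjoint)
  qed
  also have "\<dots> = p\<^sup>2 * (\<Prod>k\<in>R. (1 - p\<^sup>2)\<^sup>2)"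
  proof -
    have card_F: "card {edge a b, edge c d} = 2"
      using assms by (simp add: edge_eq_iff)
    have factor: "1 - p ^ card (?S k) - p ^ card (?T k) + p ^ card (?S k \<union> ?T k) = (1 - p\<^sup>2)\<^sup>2"
      if "k \<in> R" for k
    proof -
      have "card (?S k) = 2" "card (?T k) = 2" "card (?S k \<union> ?T k) = 4"
        unfolding star using R[OF that] assms by (simp_all add: card_edge_star)
      then show ?thesis
        by (simp add: power2_eq_square power4_eq_xxxx algebra_simps)
    qed
    have "(\<Prod>k\<in>R. 1 - p ^ card (?S k) - p ^ card (?T k) + p ^ card (?S k \<union> ?T k)) = (\<Prod>k\<in>R. (1 - p\<^sup>2)\<^sup>2)"
      by (rule prod.cong[OF refl]) (rule factor)
    then show ?thesis
      unfolding card_F by (rule arg_cong)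
  qed
  also have "\<dots> = p\<^sup>2 * (1 - p\<^sup>2) ^ (2 * (n - 4))"
    using card_R by (simp add: power_mult)
  finally show ?thesis .
qed

lemma expectation_adjacent_triangle_free_edges_le:
  assumes "v \<in> {1..n}" "u \<in> {1..n}" "w \<in> {1..n}" "v \<noteq> u" "v \<noteq> w" "u \<noteq> w"
  shows "E (\<lambda>G. of_bool (triangle_free_edge n G v u \<and> triangle_free_edge n G v w))
       \<le> p\<^sup>2 * (1 - 2 * p\<^sup>2 + p ^ 3) ^ (n - 3)"
proof -
  define R where "R = {1..n} - {v, u, w}"
  have card_R: "card R = n - 3"
    using assms by (simp add: R_def card_Diff_subset)
  have R: "k \<in> {1..n}" "k \<notin> {v, u, w}" if "k \<in> R" for k
    using that by (auto simp: R_def)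
  let ?S = "edge_star {v, u}" and ?T = "edge_star {v, w}"
  have star: "?S k \<union> ?T k = edge_star {v, u, w} k" for k
    by (auto simp: edge_star_def)
  have event: "(\<forall>e\<in>{edge v u, edge v w}. G e) \<and> (\<forall>k\<in>R. \<not> (\<forall>e\<in>?S k. G e) \<and> \<not> (\<forall>e\<in>?T k. G e))"
    if "triangle_free_edge n G v u \<and> triangle_free_edge n G v w" for G
  proof -
    have "G (edge v u)" "\<forall>k\<in>{1..n} - {v, u}. \<not> (\<forall>e\<in>?S k. G e)"
      using that assms(4) by (simp_all add: triangle_free_edge_iff)
    moreover have "G (edge v w)" "\<forall>k\<in>{1..n} - {v, w}. \<not> (\<forall>e\<in>?T k. G e)"
      using that assms(5) by (simp_all add: triangle_free_edge_iff)
    ultimately show ?thesis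
      unfolding R_def by blast
  qed
  have "E (\<lambda>G. of_bool (triangle_free_edge n G v u \<and> triangle_free_edge n G v w))
      \<le> E (\<lambda>G. of_bool ((\<forall>e\<in>{edge v u, edge v w}. G e) \<and> (\<forall>k\<in>R. \<not> (\<forall>e\<in>?S k. G e) \<and> \<not> (\<forall>e\<in>?T k. G e))))"
    using event by (intro integral_mono integrable_M) auto
  also have "\<dots> = p ^ card {edge v u, edge v w} * (\<Prod>k\<in>R. 1 - p ^ card (?S k) - p ^ card (?T k) + p ^ card (?S k \<union> ?T k))"
  proof (rule expectation_edges_without_paths)
    show "finite R"
      by (simp add: R_def)
    show "{edge v u, edge v w} \<subseteq> pot_edges n"
      using assms by (simp add: edge_in_pot_edges)
    show "?S k \<union> ?T k \<subseteq> pot_edges n" if "k \<in> R" for k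
      unfolding star using R[OF that] assms by (simp add: edge_star_subset_pot_edges)
    show "{edge v u, edge v w} \<inter> (?S k \<union> ?T k) = {}" if "k \<in> R" for k
      unfolding star using R[OF that] by (simp add: edge_notin_edge_star)
    show "(?S k \<union> ?T k) \<inter> (?S l \<union> ?T l) = {}" if "k \<in> R" "l \<in> R" "k \<noteq> l" for k l
      unfolding star using R that by (simp add: edge_star_disjoint)
  qed
  also have "\<dots> = p\<^sup>2 * (\<Prod>k\<in>R. 1 - 2 * p\<^sup>2 + p ^ 3)"
  proof -
    have card_F: "card {edge v u, edge v w} = 2"
      using assms by (simp add: edge_eq_iff)
    have factor: "1 - p ^ card (?S k) - p ^ card (?T k) + p ^ card (?S k \<union> ?T k) = 1 - 2 * p\<^sup>2 + p ^ 3"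
      if "k \<in> R" for k
    proof -
      have "card (?S k) = 2" "card (?T k) = 2" "card (?S k \<union> ?T k) = 3"
        unfolding star using R[OF that] assms by (simp_all add: card_edge_star)
      then show ?thesis
        by simp
    qed
    have "(\<Prod>k\<in>R. 1 - p ^ card (?S k) - p ^ card (?T k) + p ^ card (?S k \<union> ?T k)) = (\<Prod>k\<in>R. 1 - 2 * p\<^sup>2 + p ^ 3)"
      by (rule prod.cong[OF refl]) (rule factor)
    then show ?thesis
      unfolding card_F by (rule arg_cong)
  qed
  also have "\<dots> = p\<^sup>2 * (1 - 2 * p\<^sup>2 + p ^ 3) ^ (n - 3)"
    using card_R by simp
  finally show ?thesis .
qed

definition triangle_free_indicator :: "nat \<times> nat \<Rightarrow> (nat \<times> nat \<Rightarrow> bool) \<Rightarrow> real" where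
  "triangle_free_indicator e G = of_bool (triangle_free_edge n G (fst e) (snd e))"

lemma expectation_triangle_free_edges:
  "E (\<lambda>G. real (triangle_free_edges n G)) = real (n choose 2) * p * (1 - p\<^sup>2) ^ (n - 2)"
proof -
  have "E (\<lambda>G. real (triangle_free_edges n G))
      = (\<Sum>e\<in>pot_edges n. E (\<lambda>G. of_bool (triangle_free_edge n G (fst e) (snd e))))"
    unfolding real_triangle_free_edges by (intro Bochner_Integration.integral_sum integrable_M)
  also have "\<dots> = (\<Sum>e\<in>pot_edges n. p * (1 - p\<^sup>2) ^ (n - 2))"
    by (intro sum.cong refl expectation_triangle_free_edge) (auto simp: pot_edges_def)
  finally show ?thesis
    by (simp add: card_pot_edges)
qed

lemma expectation_triangle_free_pair_le:
  assumes e: "e \<in> pot_edges n" and f: "f \<in> pot_edges n"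
  shows "E (\<lambda>G. triangle_free_indicator e G * triangle_free_indicator f G)
       \<le> (if e = f then p * (1 - p\<^sup>2) ^ (n - 2) else 0) + p\<^sup>2 * (1 - p\<^sup>2) ^ (2 * (n - 4))
         + (if share_vertex e f then p\<^sup>2 * (1 - 2 * p\<^sup>2 + p ^ 3) ^ (n - 3) else 0)"
    (is "_ \<le> ?same + ?disjoint + ?shared")
proof -
  have nonneg: "0 \<le> ?disjoint" "0 \<le> ?shared"
    using p_prob cherry_factor_nonneg by auto
  obtain a b c d where ab: "e = (a, b)" and cd: "f = (c, d)" by fastforce
  have V: "a \<in> {1..n}" "b \<in> {1..n}" "c \<in> {1..n}" "d \<in> {1..n}" "a < b" "c < d"
    using e f ab cd by (auto simp: pot_edges_def)
  have product: "triangle_free_indicator e G * triangle_free_indicator f G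
      = of_bool (triangle_free_edge n G a b \<and> triangle_free_edge n G c d)" for G
    by (simp add: triangle_free_indicator_def ab cd)
  consider "e = f" | "e \<noteq> f" "\<not> share_vertex e f" | "share_vertex e f"
    by (auto simp: share_vertex_def)
  then show ?thesis
  proof cases
    case 1
    have "E (\<lambda>G. triangle_free_indicator e G * triangle_free_indicator f G) = p * (1 - p\<^sup>2) ^ (n - 2)"
      unfolding product using 1 V by (simp add: ab cd expectation_triangle_free_edge)
    then show ?thesis using 1 nonneg by simp
  next
    case 2
    then have "E (\<lambda>G. triangle_free_indicator e G * triangle_free_indicator f G) \<le> ?disjoint"
      using V unfolding product
      by (intro expectation_disjoint_triangle_free_edges_le) (auto simp: ab cd share_vertex_def)
    then show ?thesis using 2 by simp
  next
    case 3
    obtain v u w where W: "v \<in> {1..n}" "u \<in> {1..n}" "w \<in> {1..n}" "v \<noteq> u" "v \<noteq> w" "u \<noteq> w"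
      "edge a b = edge v u" "edge c d = edge v w"
      using e f 3 unfolding ab cd by (rule share_vertex_relabel)
    have "E (\<lambda>G. triangle_free_indicator e G * triangle_free_indicator f G)
        = E (\<lambda>G. of_bool (triangle_free_edge n G v u \<and> triangle_free_edge n G v w))"
      unfolding product using triangle_free_edge_cong[OF W(7)] triangle_free_edge_cong[OF W(8)] by simp
    also have "\<dots> \<le> p\<^sup>2 * (1 - 2 * p\<^sup>2 + p ^ 3) ^ (n - 3)"
      using W by (intro expectation_adjacent_triangle_free_edges_le)
    finally have "E (\<lambda>G. triangle_free_indicator e G * triangle_free_indicator f G) \<le> ?shared"
      using 3 by simp
    moreover have "e \<noteq> f"
      using 3 by (simp add: share_vertex_def)
    ultimately show ?thesis
      using 3 nonneg by (simp add: add_increasing)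
  qed
qed

lemma second_moment_triangle_free_edges_le:
  defines "(N :: real) \<equiv> real (n choose 2)"
  shows "E (\<lambda>G. (real (triangle_free_edges n G))\<^sup>2)
       \<le> N * (p * (1 - p\<^sup>2) ^ (n - 2)) + N\<^sup>2 * (p\<^sup>2 * (1 - p\<^sup>2) ^ (2 * (n - 4)))
         + 4 * real n * N * (p\<^sup>2 * (1 - 2 * p\<^sup>2 + p ^ 3) ^ (n - 3))"
proof -
  define q where "q = p * (1 - p\<^sup>2) ^ (n - 2)"
  define A where "A = p\<^sup>2 * (1 - p\<^sup>2) ^ (2 * (n - 4))"
  define B where "B = p\<^sup>2 * (1 - 2 * p\<^sup>2 + p ^ 3) ^ (n - 3)"
  have B_nonneg: "0 \<le> B"
    using p_prob cherry_factor_nonneg by (simp add: B_def)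
  let ?Y = triangle_free_indicator and ?P = "pot_edges n"
  have "E (\<lambda>G. (real (triangle_free_edges n G))\<^sup>2) = (\<Sum>e\<in>?P. \<Sum>f\<in>?P. E (\<lambda>G. ?Y e G * ?Y f G))"
    by (simp add: real_triangle_free_edges power2_eq_square sum_product triangle_free_indicator_def
        Bochner_Integration.integral_sum integrable_M)
  also have "\<dots> \<le> (\<Sum>e\<in>?P. \<Sum>f\<in>?P. (if e = f then q else 0) + A + (if share_vertex e f then B else 0))"
    unfolding q_def A_def B_def by (intro sum_mono expectation_triangle_free_pair_le)
  also have "\<dots> = (\<Sum>e\<in>?P. q + N * A + B * card {f \<in> ?P. share_vertex e f})"
    by (intro sum.cong refl)
      (simp add: sum.distrib sum.If_cases finite_pot_edges N_def card_pot_edges Int_def conj_commute)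
  also have "\<dots> \<le> (\<Sum>e\<in>?P. q + N * A + B * (4 * real n))"
  proof (intro sum_mono add_left_mono mult_left_mono B_nonneg)
    fix e
    have "real (card {f \<in> ?P. share_vertex e f}) \<le> real (4 * n)"
      by (intro of_nat_mono card_share_vertex_le)
    then show "real (card {f \<in> ?P. share_vertex e f}) \<le> 4 * real n"
      by simp
  qed
  also have "\<dots> = N * q + N\<^sup>2 * A + 4 * real n * N * B"
    by (simp add: N_def card_pot_edges power2_eq_square algebra_simps)
  finally show ?thesis by (simp add: q_def A_def B_def)
qed

lemma prob_no_triangle_free_edge_le:
  defines "(N :: real) \<equiv> real (n choose 2)" and "\<mu> \<equiv> real (n choose 2) * p * (1 - p\<^sup>2) ^ (n - 2)"
  assumes "\<mu> > 0"
  shows "measure_pmf.prob (G_np n p) {G. triangle_free_edges n G = 0}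
       \<le> (\<mu> + N\<^sup>2 * (p\<^sup>2 * (1 - p\<^sup>2) ^ (2 * (n - 4)))
           + 4 * real n * N * (p\<^sup>2 * (1 - 2 * p\<^sup>2 + p ^ 3) ^ (n - 3)) - \<mu>\<^sup>2) / \<mu>\<^sup>2"
proof -
  let ?X = "\<lambda>G. real (triangle_free_edges n G)"
  have mean: "E ?X = \<mu>"
    by (simp add: expectation_triangle_free_edges \<mu>_def)
  have "measure_pmf.prob M {G \<in> space M. ?X G = 0} \<le> (E (\<lambda>G. (?X G)\<^sup>2) - \<mu>\<^sup>2) / \<mu>\<^sup>2"
    using measure_pmf.prob_eq_0_le_second_moment[where M = M and X = ?X] assms(3) unfolding mean
    by (simp add: integrable_M)
  also have "\<dots> \<le> (\<mu> + N\<^sup>2 * (p\<^sup>2 * (1 - p\<^sup>2) ^ (2 * (n - 4)))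
           + 4 * real n * N * (p\<^sup>2 * (1 - 2 * p\<^sup>2 + p ^ 3) ^ (n - 3)) - \<mu>\<^sup>2) / \<mu>\<^sup>2"
    using second_moment_triangle_free_edges_le
    by (intro divide_right_mono diff_right_mono) (simp_all add: \<mu>_def N_def mult.assoc)
  finally show ?thesis
    by (simp add: G_np_def)
qed

end

section \<open>Asymptotics\<close>

lemma prob_no_triangle_free_edge_bound:
  fixes n :: nat and p :: real
  defines "\<mu> \<equiv> real (n choose 2) * p * (1 - p\<^sup>2) ^ (n - 2)"
  assumes n: "n \<ge> 4" and p: "0 \<le> p" "p \<le> 1/10" and mu: "1 \<le> \<mu>"
  shows "measure_pmf.prob (G_np n p) {G. triangle_free_edges n G = 0}
       \<le> 1 / \<mu> + (1 / (1 - p\<^sup>2) ^ 4 - 1) + 32 * sqrt (real n) / real n"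
proof -
  interpret gnp_graph n p
    using p by unfold_locales auto
  define N where "N = real (n choose 2)"
  define A where "A = N\<^sup>2 * (p\<^sup>2 * (1 - p\<^sup>2) ^ (2 * (n - 4)))"
  define B where "B = 4 * real n * N * (p\<^sup>2 * (1 - 2 * p\<^sup>2 + p ^ 3) ^ (n - 3))"
  have "0 < \<mu>" using mu by simp
  then have "p \<noteq> 0" "1 - p\<^sup>2 \<noteq> 0"
    using n by (auto simp: \<mu>_def power_0_left)
  have "N \<noteq> 0"
    using real_choose_two_ge[OF n] n by (simp add: N_def)
  have "measure_pmf.prob (G_np n p) {G. triangle_free_edges n G = 0} \<le> (\<mu> + A + B - \<mu>\<^sup>2) / \<mu>\<^sup>2"
    using \<open>0 < \<mu>\<close> prob_no_triangle_free_edge_le unfolding \<mu>_def A_def B_def N_def by blast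
  also have "\<dots> = 1 / \<mu> + (A / \<mu>\<^sup>2 - 1) + B / \<mu>\<^sup>2"
    using \<open>0 < \<mu>\<close> by (simp add: field_simps power2_eq_square)
  also have "A / \<mu>\<^sup>2 = 1 / (1 - p\<^sup>2) ^ 4"
    unfolding A_def \<mu>_def N_def
    using disjoint_pairs_ratio[OF n \<open>N \<noteq> 0\<close> \<open>p \<noteq> 0\<close> \<open>1 - p\<^sup>2 \<noteq> 0\<close>] by (simp add: N_def)
  also have "B / \<mu>\<^sup>2 \<le> 32 * sqrt (real n) / real n"
    unfolding B_def N_def \<mu>_def using shared_pairs_ratio_le[OF n p] mu by (simp add: \<mu>_def)
  finally show ?thesis by simp
qed

lemma prob_no_triangle_free_edge_tendsto_0:
  fixes p :: "nat \<Rightarrow> real"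
  assumes prob: "\<forall>n. 0 \<le> p n \<and> p n \<le> 1"
    and mean: "filterlim (\<lambda>n. real (n choose 2) * p n * (1 - (p n)\<^sup>2) ^ (n - 2)) at_top sequentially"
  shows "(\<lambda>n. measure_pmf.prob (G_np n (p n)) {G. triangle_free_edges n G = 0}) \<longlonglongrightarrow> 0"
proof -
  define \<mu> where "\<mu> n = real (n choose 2) * p n * (1 - (p n)\<^sup>2) ^ (n - 2)" for n
  have mu_ge_1: "\<forall>\<^sub>F n in sequentially. 1 \<le> \<mu> n"
    using mean unfolding \<mu>_def filterlim_at_top by blast
  have "\<forall>\<^sub>F n in sequentially. (p n)\<^sup>2 \<le> 2 * ln (real n) / (real n - 2)"
    using mu_ge_1 eventually_ge_at_top[of 4]
    by eventually_elim (use prob square_le_of_mean_ge_1 \<mu>_def in auto)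
  moreover have "(\<lambda>n. 2 * ln (real n) / (real n - 2)) \<longlonglongrightarrow> 0"
    by real_asymp
  ultimately have p_sq: "(\<lambda>n. (p n)\<^sup>2) \<longlonglongrightarrow> 0"
    by (rule tendsto_sandwich[OF _ _ tendsto_const, rotated]) simp
  have "\<forall>\<^sub>F n in sequentially. (p n)\<^sup>2 < (1/10)\<^sup>2"
    using order_tendstoD(2)[OF p_sq] by simp
  then have "\<forall>\<^sub>F n in sequentially. p n \<le> 1/10"
    by eventually_elim (auto dest: power_less_imp_less_base)
  then have "\<forall>\<^sub>F n in sequentially. measure_pmf.prob (G_np n (p n)) {G. triangle_free_edges n G = 0}
      \<le> 1 / \<mu> n + (1 / (1 - (p n)\<^sup>2) ^ 4 - 1) + 32 * sqrt (real n) / real n"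
    using mu_ge_1 eventually_ge_at_top[of 4]
    by eventually_elim (use prob prob_no_triangle_free_edge_bound \<mu>_def in auto)
  moreover have "(\<lambda>n. 1 / \<mu> n + (1 / (1 - (p n)\<^sup>2) ^ 4 - 1) + 32 * sqrt (real n) / real n) \<longlonglongrightarrow> 0"
  proof -
    have "(\<lambda>n. 1 / \<mu> n) \<longlonglongrightarrow> 0"
      using tendsto_inverse_0_at_top[OF mean[folded \<mu>_def]] by (simp add: inverse_eq_divide)
    moreover have "(\<lambda>n. 1 / (1 - (p n)\<^sup>2) ^ 4 - 1) \<longlonglongrightarrow> 1 / (1 - 0) ^ 4 - 1"
      by (intro tendsto_intros p_sq) simp
    moreover have "(\<lambda>n. 32 * sqrt (real n) / real n) \<longlonglongrightarrow> 0"
      by real_asymp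
    ultimately show ?thesis
      using tendsto_add[OF tendsto_add] by force
  qed
  ultimately show ?thesis
    by (rule tendsto_sandwich[OF _ _ tendsto_const, rotated]) simp
qed

lemma mean_tendsto_at_top:
  fixes p :: "nat \<Rightarrow> real"
  assumes prob: "\<forall>n. 0 \<le> p n \<and> p n \<le> 1"
    and lower: "\<forall>\<^sub>F n in sequentially. 1 / sqrt (real n) \<le> p n"
    and upper: "\<forall>\<^sub>F n in sequentially. p n < sqrt ((3/2 - \<epsilon>) * ln (real n) / real n)"
    and "\<epsilon> > 0"
  shows "filterlim (\<lambda>n. real (n choose 2) * p n * (1 - (p n)\<^sup>2) ^ (n - 2)) at_top sequentially"
proof (cases "\<epsilon> < 3/2")
  case False
  \<comment> \<open>then the upper bound on \<open>p n\<close> is eventually nonpositive, so the hypothesis is vacuous\<close>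
  have "\<forall>\<^sub>F n in sequentially. False"
    using upper eventually_ge_at_top[of 1]
  proof eventually_elim
    case (elim n)
    then have "(3/2 - \<epsilon>) * ln (real n) / real n \<le> 0"
      using False by (intro divide_nonpos_nonneg mult_nonpos_nonneg) auto
    then have "sqrt ((3/2 - \<epsilon>) * ln (real n) / real n) \<le> 0"
      by simp
    then show False
      using elim(1) prob by (meson le_less_trans not_less)
  qed
  then show ?thesis by simp
next
  case True
  define c where "c = 3/2 - \<epsilon>"
  have "c > 0" using True by (simp add: c_def)
  have "\<forall>\<^sub>F n in sequentially. c * ln (real n) / real n \<le> 1/2"
    "\<forall>\<^sub>F n in sequentially. 2 * c\<^sup>2 * (ln (real n))\<^sup>2 / real n \<le> 1"
    by real_asymp+
  then have "\<forall>\<^sub>F n in sequentially.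
      exp (\<epsilon> * ln (real n) - 1) / 4 \<le> real (n choose 2) * p n * (1 - (p n)\<^sup>2) ^ (n - 2)"
    using eventually_ge_at_top[of 4] lower upper
    by eventually_elim (use mean_lower_bound[OF _ _ _ \<open>c > 0\<close>] in \<open>auto simp: c_def\<close>)
  moreover have "filterlim (\<lambda>n. exp (\<epsilon> * ln (real n) - 1) / 4) at_top sequentially"
    using \<open>\<epsilon> > 0\<close> by real_asymp
  ultimately show ?thesis
    by (rule filterlim_at_top_mono[rotated])
qed

theorem proposition2p7:
  fixes p :: "nat \<Rightarrow> real"
  assumes prob: "\<forall>n. 0 \<le> p n \<and> p n \<le> 1"
    and lower: "\<forall>\<^sub>F n in sequentially. 1 / sqrt (real n) \<le> p n"
  shows "(filterlim (\<lambda>n. real (n choose 2) * p n * (1 - (p n)\<^sup>2) ^ (n - 2)) at_top sequentially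
            \<longrightarrow> (\<lambda>n. measure_pmf.prob (G_np n (p n)) {G. triangle_free_edges n G = 0})
                  \<longlonglongrightarrow> 0)
       \<and> ((\<exists>\<epsilon>>0. \<forall>\<^sub>F n in sequentially. p n < sqrt ((3/2 - \<epsilon>) * ln (real n) / real n))
            \<longrightarrow> (\<lambda>n. measure_pmf.prob (G_np n (p n)) {G. triangle_free_edges n G = 0})
                  \<longlonglongrightarrow> 0)"
  using prob_no_triangle_free_edge_tendsto_0[OF prob] mean_tendsto_at_top[OF prob lower] by blast

end
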